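(* Let $H$ be a separable infinite-dimensional complex Hilbert space and let $U\in\mathcal{L}(H)$ be universal. Then: (i) There is $r>0$ such that the open disc $B(0,r)=\{z\in\mathbb{C}:|z|<r\}$ satisfies \[ B(0,r)\subset \sigma_p(U;H)\cap\sigma_e^+(U;H)\subset \sigma_e(U;H)\subset\sigma(U;H), \] and moreover every $\lambda\in B(0,r)$ is an eigenvalue of $U$ of infinite multiplicity. In particular, $0$ is an interior point of each of the sets $\sigma_e^+(U;H)$, $\sigma_e(U;H)$, $\sigma_p(U;H)$ and $\sigma(U;H)$. (ii) There is $r>0$ and a (vector-valued) holomorphic map $z\mapsto y_z$, $B(0,r)\to H$, such that $Uy_z=zy_z$ for all $z\in B(0,r)$.
   Context: $\mathcal{L}(H)$ denotes the bounded linear operators on $H$. Operators $T_1\in\mathcal{L}(H_1)$, $T_2\in\mathcal{L}(H_2)$ are similar if there is a linear isomorphism $J:H_1\to H_2$ with $T_1=J^{-1}T_2J$. An operator $U\in\mathcal{L}(H)$ is universal if for every $T\in\mathcal{L}(H)$ there exist a closed subspace $M\subset H$ with $U(M)\subset M$ and a constant $c\neq0$ such that $U|_M:M\to M$ and $cT:H\to H$ are similar. $\sigma(S;H)$ is the spectrum, $\sigma_p(S;H)$ the point spectrum, $\sigma_e(S;H)=\{\lambda: S-\lambda I \text{ is not Fredholm}\}$ the essential spectrum, and $\sigma_e^+(S;H)=\{\lambda: S-\lambda I\notin\Phi_+(H)\}$, where $\Phi_+(H)$ is the set of operators with finite-dimensional kernel and closed range. *)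

theory Defs
  imports "HOL-Analysis.Analysis"
begin

class complex_vector = real_vector +
  fixes scaleC :: "complex \<Rightarrow> 'a \<Rightarrow> 'a" (infixr \<open>*\<^sub>C\<close> 75)
  assumes scaleC_add_right: "a *\<^sub>C (x + y) = a *\<^sub>C x + a *\<^sub>C y"
    and scaleC_add_left: "(a + b) *\<^sub>C x = a *\<^sub>C x + b *\<^sub>C x"
    and scaleC_scaleC: "a *\<^sub>C (b *\<^sub>C x) = (a * b) *\<^sub>C x"
    and scaleC_one: "1 *\<^sub>C x = x"
    and scaleR_scaleC: "scaleR r x = (complex_of_real r) *\<^sub>C x"

class complex_inner = complex_vector + real_normed_vector +
  fixes cinner :: "'a \<Rightarrow> 'a \<Rightarrow> complex"
  assumes cinner_commute: "cinner x y = cnj (cinner y x)"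
    and cinner_add_left: "cinner (x + y) z = cinner x z + cinner y z"
    and cinner_scaleC_left: "cinner (c *\<^sub>C x) y = cnj c * cinner x y"
    and cinner_nonneg: "0 \<le> Re (cinner x x)"
    and cinner_eq_zero_iff: "cinner x x = 0 \<longleftrightarrow> x = 0"
    and norm_eq_sqrt_cinner: "norm x = sqrt (Re (cinner x x))"

class chilbert = complex_inner + complete_space

definition cspan :: "'a::complex_vector set \<Rightarrow> 'a set" where
  "cspan B = module.span scaleC B"

definition cdependent :: "'a::complex_vector set \<Rightarrow> bool" where
  "cdependent B = module.dependent scaleC B"

definition cfinite_dim :: "'a::complex_vector set \<Rightarrow> bool" where
  "cfinite_dim S \<longleftrightarrow> (\<exists>B. finite B \<and> S \<subseteq> cspan B)"

definition infinite_dimensional_space :: "'a::complex_vector itself \<Rightarrow> bool" where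
  "infinite_dimensional_space _ \<longleftrightarrow> (\<exists>S::'a set. infinite S \<and> \<not> cdependent S)"

definition separable_space_type :: "'a::topological_space itself \<Rightarrow> bool" where
  "separable_space_type _ \<longleftrightarrow> (\<exists>D::'a set. countable D \<and> closure D = UNIV)"

definition clinear :: "('a::complex_vector \<Rightarrow> 'b::complex_vector) \<Rightarrow> bool" where
  "clinear f \<longleftrightarrow> (\<forall>x y. f (x + y) = f x + f y) \<and> (\<forall>c x. f (c *\<^sub>C x) = c *\<^sub>C f x)"

definition bounded_clinear :: "('a::complex_inner \<Rightarrow> 'b::complex_inner) \<Rightarrow> bool" where
  "bounded_clinear f \<longleftrightarrow> clinear f \<and> (\<exists>K. \<forall>x. norm (f x) \<le> norm x * K)"

definition closed_csubspace :: "'a::complex_inner set \<Rightarrow> bool" where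
  "closed_csubspace M \<longleftrightarrow> closed M \<and> 0 \<in> M \<and> (\<forall>x\<in>M. \<forall>y\<in>M. x + y \<in> M)
     \<and> (\<forall>c. \<forall>x\<in>M. c *\<^sub>C x \<in> M)"

definition similar_restr :: "'a::complex_inner set \<Rightarrow> ('a \<Rightarrow> 'a) \<Rightarrow> ('a \<Rightarrow> 'a) \<Rightarrow> bool" where
  "similar_restr M V S \<longleftrightarrow>
     (\<exists>J Ji.
        (\<forall>x\<in>M. \<forall>y\<in>M. J (x + y) = J x + J y) \<and> (\<forall>c. \<forall>x\<in>M. J (c *\<^sub>C x) = c *\<^sub>C J x) \<and>
        (\<exists>K. \<forall>x\<in>M. norm (J x) \<le> norm x * K) \<and>
        bounded_clinear Ji \<and> (\<forall>x. Ji x \<in> M \<and> J (Ji x) = x) \<and> (\<forall>y\<in>M. Ji (J y) = y) \<and>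
        (\<forall>y\<in>M. V y = Ji (S (J y))))"

definition universal_op :: "('a::complex_inner \<Rightarrow> 'a) \<Rightarrow> bool" where
  "universal_op U \<longleftrightarrow>
     (\<forall>T. bounded_clinear T \<longrightarrow>
        (\<exists>M c. closed_csubspace M \<and> U ` M \<subseteq> M \<and> c \<noteq> 0 \<and>
               similar_restr M U (\<lambda>x. c *\<^sub>C T x)))"

definition cinvertible :: "('a::complex_inner \<Rightarrow> 'a) \<Rightarrow> bool" where
  "cinvertible A \<longleftrightarrow> (\<exists>R. bounded_clinear R \<and> (\<forall>x. R (A x) = x) \<and> (\<forall>x. A (R x) = x))"

definition shift_op :: "('a::complex_vector \<Rightarrow> 'a) \<Rightarrow> complex \<Rightarrow> 'a \<Rightarrow> 'a" where
  "shift_op S l = (\<lambda>x. S x - l *\<^sub>C x)"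

definition op_spectrum :: "('a::complex_inner \<Rightarrow> 'a) \<Rightarrow> complex set" where
  "op_spectrum S = {l. \<not> cinvertible (shift_op S l)}"

definition point_spectrum :: "('a::complex_inner \<Rightarrow> 'a) \<Rightarrow> complex set" where
  "point_spectrum S = {l. \<exists>x. x \<noteq> 0 \<and> S x = l *\<^sub>C x}"

definition upper_semi_fredholm :: "('a::complex_inner \<Rightarrow> 'a) \<Rightarrow> bool" where
  "upper_semi_fredholm A \<longleftrightarrow> cfinite_dim {x. A x = 0} \<and> closed (range A)"

definition fredholm :: "('a::complex_inner \<Rightarrow> 'a) \<Rightarrow> bool" where
  "fredholm A \<longleftrightarrow> cfinite_dim {x. A x = 0} \<and> closed (range A) \<and>
     (\<exists>B. finite B \<and> (\<forall>x. \<exists>y z. x = A y + z \<and> z \<in> cspan B))"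

definition essential_spectrum :: "('a::complex_inner \<Rightarrow> 'a) \<Rightarrow> complex set" where
  "essential_spectrum S = {l. \<not> fredholm (shift_op S l)}"

definition upper_essential_spectrum :: "('a::complex_inner \<Rightarrow> 'a) \<Rightarrow> complex set" where
  "upper_essential_spectrum S = {l. \<not> upper_semi_fredholm (shift_op S l)}"

definition vholomorphic_on :: "(complex \<Rightarrow> 'a::complex_inner) \<Rightarrow> complex set \<Rightarrow> bool" where
  "vholomorphic_on f S \<longleftrightarrow>
     (\<forall>z\<in>S. \<exists>d. ((\<lambda>w. inverse (w - z) *\<^sub>C (f w - f z)) \<longlongrightarrow> d) (at z within S))"

end

theory Submission
  imports Defs
begin

text \<open>Universality applied to \<open>T = 0\<close> yields a closed subspace \<open>M\<close>, isomorphic to the whole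
  space, on which \<open>U\<close> vanishes. Composing the isomorphism with the orthogonal projection onto
  \<open>M\<close> gives an operator \<open>T\<close> with a bounded right inverse \<open>V\<close>; its kernel contains the
  orthogonal complement of \<open>M\<close>, which is infinite-dimensional because \<open>U\<close> maps it onto the
  range of \<open>U\<close>, and that range contains a copy of the space by universality applied to the
  identity. For small \<open>\<lambda>\<close>, \<open>(I - \<lambda>V)\<^sup>-\<^sup>1\<close> maps \<open>ker T\<close> injectively into \<open>ker (T - \<lambda>)\<close>,
  and by the resolvent identity it depends holomorphically on \<open>\<lambda>\<close>. Universality applied to
  \<open>T\<close> carries these eigenvectors into eigenvectors of \<open>U\<close>.\<close>

interpretation cvs: vector_space "scaleC :: complex \<Rightarrow> 'a::complex_vector \<Rightarrow> 'a"
  by unfold_locales (auto simp: scaleC_add_right scaleC_add_left scaleC_scaleC scaleC_one)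

lemma cspan_eq_span: "cspan B = cvs.span B"
  unfolding cspan_def by simp

lemma cdependent_eq_dependent: "cdependent B = cvs.dependent B"
  unfolding cdependent_def by simp

lemma closed_csubspace_imp_subspace: "closed_csubspace M \<Longrightarrow> cvs.subspace M"
  unfolding closed_csubspace_def cvs.subspace_def by blast

lemma cinner_add_right: "cinner x (y + z) = cinner x y + cinner x (z::'a::complex_inner)"
  by (metis cinner_add_left cinner_commute complex_cnj_add)

lemma cinner_scaleC_right: "cinner x (c *\<^sub>C y) = c * cinner x (y::'a::complex_inner)"
  by (metis cinner_commute cinner_scaleC_left complex_cnj_cnj complex_cnj_mult)

lemma cinner_zero_right [simp]: "cinner x (0::'a::complex_inner) = 0"
  using cinner_add_right[of x 0 0] by simp

lemma cinner_diff_right: "cinner x (y - z) = cinner x y - cinner x (z::'a::complex_inner)"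
  by (metis cinner_add_right eq_diff_eq)

lemma cinner_diff_left: "cinner (x - y) z = cinner x z - cinner y (z::'a::complex_inner)"
  by (metis cinner_add_left eq_diff_eq)

lemma power2_norm_eq_cinner: "(norm x)\<^sup>2 = Re (cinner x (x::'a::complex_inner))"
  by (simp add: norm_eq_sqrt_cinner cinner_nonneg)

lemma cinner_self_eq_power2_norm: "cinner x x = complex_of_real ((norm (x::'a::complex_inner))\<^sup>2)"
proof -
  have "Im (cinner x x) = 0"
    using arg_cong[OF cinner_commute[of x x], of Im] by simp
  then show ?thesis
    by (simp add: complex_eq_iff power2_norm_eq_cinner)
qed

lemma Re_cinner_commute: "Re (cinner y x) = Re (cinner x (y::'a::complex_inner))"
  by (subst cinner_commute) simp

lemma power2_norm_add:
  "(norm (x + y))\<^sup>2 = (norm x)\<^sup>2 + (norm y)\<^sup>2 + 2 * Re (cinner x (y::'a::complex_inner))"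
  unfolding power2_norm_eq_cinner
  by (simp add: cinner_add_left cinner_add_right Re_cinner_commute[of y x])

lemma power2_norm_diff:
  "(norm (x - y))\<^sup>2 = (norm x)\<^sup>2 + (norm y)\<^sup>2 - 2 * Re (cinner x (y::'a::complex_inner))"
  unfolding power2_norm_eq_cinner
  by (simp add: cinner_diff_left cinner_diff_right Re_cinner_commute[of y x])

lemma parallelogram_law:
  "(norm (x - y))\<^sup>2 + (norm (x + y))\<^sup>2 = 2 * (norm x)\<^sup>2 + 2 * (norm (y::'a::complex_inner))\<^sup>2"
  unfolding power2_norm_add power2_norm_diff by simp

lemma norm_scaleC: "norm (c *\<^sub>C x) = cmod c * norm (x::'a::complex_inner)"
proof -
  have "cinner (c *\<^sub>C x) (c *\<^sub>C x) = (cnj c * c) * cinner x x"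
    unfolding cinner_scaleC_left cinner_scaleC_right by (simp only: mult_ac)
  also have "\<dots> = complex_of_real ((cmod c * norm x)\<^sup>2)"
    by (metis cinner_self_eq_power2_norm complex_norm_square mult.commute of_real_mult
        power_mult_distrib)
  finally have "(norm (c *\<^sub>C x))\<^sup>2 = (cmod c * norm x)\<^sup>2"
    unfolding power2_norm_eq_cinner[of "c *\<^sub>C x"] by simp
  then show ?thesis
    by (rule power2_eq_imp_eq) simp_all
qed

lemma cinner_eq_zero_if_minimal_norm:
  fixes z m :: "'a::complex_inner"
  assumes "\<And>c. norm z \<le> norm (z - c *\<^sub>C m)"
  shows "cinner z m = 0"
proof (rule ccontr)
  assume "cinner z m \<noteq> 0"
  define w where "w = cinner z m"
  define N where "N = (norm m)\<^sup>2"
  define t where "t = 1 / (N + 1)"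
  have "0 < N + 1"
    unfolding N_def by (rule add_nonneg_pos) simp_all
  then have t: "0 < t" "t * N < 1"
    unfolding t_def by (simp_all add: field_simps)
  define c where "c = complex_of_real t * cnj w"
  have "cnj w * w = complex_of_real ((cmod w)\<^sup>2)"
    by (metis complex_norm_square mult.commute)
  then have "Re (cinner z (c *\<^sub>C m)) = t * (cmod w)\<^sup>2"
    unfolding c_def cinner_scaleC_right w_def[symmetric] mult.assoc
    by (simp only: of_real_mult[symmetric] Re_complex_of_real)
  moreover have "(norm (c *\<^sub>C m))\<^sup>2 = t * (cmod w)\<^sup>2 * (t * N)"
    unfolding c_def norm_scaleC norm_mult N_def using t(1)
    by (simp add: power_mult_distrib power2_eq_square mult_ac)
  moreover have "(norm z)\<^sup>2 \<le> (norm (z - c *\<^sub>C m))\<^sup>2"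
    using assms by (simp add: power_mono)
  ultimately have "t * (cmod w)\<^sup>2 * 2 \<le> t * (cmod w)\<^sup>2 * (t * N)"
    unfolding power2_norm_diff by linarith
  moreover have "0 < t * (cmod w)\<^sup>2"
    using t(1) \<open>cinner z m \<noteq> 0\<close> by (simp add: w_def)
  ultimately show False
    using t(2) by (simp add: mult_le_cancel_left_pos)
qed

section \<open>Orthogonal projection onto a closed subspace\<close>

lemma infdist_approx_power2:
  assumes "A \<noteq> {}" "0 < e"
  shows "\<exists>a\<in>A. (dist x a)\<^sup>2 < (infdist x A)\<^sup>2 + e"
proof -
  have "infdist x A < sqrt ((infdist x A)\<^sup>2 + e)"
    using infdist_nonneg assms(2) by (simp add: real_less_rsqrt)
  then obtain a where "a \<in> A" "dist x a < sqrt ((infdist x A)\<^sup>2 + e)"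
    unfolding infdist_notempty[OF assms(1)] using assms(1)
    by (meson cINF_less_iff bdd_belowI2 zero_le_dist)
  moreover from this(2) have "(dist x a)\<^sup>2 < (sqrt ((infdist x A)\<^sup>2 + e))\<^sup>2"
    by (intro power_strict_mono) auto
  ultimately show ?thesis
    using assms(2) by auto
qed

text \<open>The midpoint of \<open>a\<close> and \<open>b\<close> lies in \<open>M\<close>, hence at distance at least \<open>infdist x M\<close>
  from \<open>x\<close>; the parallelogram law around \<open>x\<close> turns this into a bound on \<open>a - b\<close>.\<close>
lemma subspace_power2_norm_diff_le:
  fixes x :: "'a::complex_inner"
  assumes M: "cvs.subspace M" and "a \<in> M" "b \<in> M"
  shows "(norm (a - b))\<^sup>2 \<le> 2 * (dist x a)\<^sup>2 + 2 * (dist x b)\<^sup>2 - 4 * (infdist x M)\<^sup>2"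
proof -
  have "(1/2::real) *\<^sub>R (a + b) \<in> M"
    unfolding scaleR_scaleC using assms by (intro cvs.subspace_scale cvs.subspace_add)
  then have "infdist x M \<le> norm (x - (1/2::real) *\<^sub>R (a + b))"
    using infdist_le[of _ M x] by (simp add: dist_norm)
  then have "(infdist x M)\<^sup>2 \<le> (norm (x - (1/2::real) *\<^sub>R (a + b)))\<^sup>2"
    using infdist_nonneg by (rule power_mono)
  moreover have "(x - b) + (x - a) = 2 *\<^sub>R (x - (1/2::real) *\<^sub>R (a + b))"
    by (simp add: algebra_simps scaleR_2)
  ultimately have "4 * (infdist x M)\<^sup>2 \<le> (norm ((x - b) + (x - a)))\<^sup>2"
    by (simp add: power_mult_distrib)
  moreover have "(norm (a - b))\<^sup>2 + (norm ((x - b) + (x - a)))\<^sup>2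
      = 2 * (dist x b)\<^sup>2 + 2 * (dist x a)\<^sup>2"
    using parallelogram_law[of "x - b" "x - a"] by (simp add: dist_norm)
  ultimately show ?thesis
    by linarith
qed

lemma closed_csubspace_nearest_point:
  fixes x :: "'a::chilbert"
  assumes M: "closed_csubspace M"
  obtains p where "p \<in> M" "\<And>q. q \<in> M \<Longrightarrow> dist x p \<le> dist x q"
proof -
  have sub: "cvs.subspace M"
    using M by (rule closed_csubspace_imp_subspace)
  define d where "d = infdist x M"
  have "\<forall>n. \<exists>a\<in>M. (dist x a)\<^sup>2 < d\<^sup>2 + inverse (Suc n)"
    unfolding d_def using cvs.subspace_0[OF sub] by (intro allI infdist_approx_power2) auto
  then obtain m where m: "\<And>n. m n \<in> M" "\<And>n. (dist x (m n))\<^sup>2 < d\<^sup>2 + inverse (Suc n)"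
    by metis
  have "Cauchy m"
  proof (rule metric_CauchyI)
    fix e :: real
    assume "0 < e"
    then obtain N where N: "inverse (real (Suc N)) < e\<^sup>2 / 4"
      using reals_Archimedean[of "e\<^sup>2 / 4"] by auto
    have "dist (m k) (m n) < e" if "N \<le> k" "N \<le> n" for k n
    proof -
      have "inverse (real (Suc k)) \<le> inverse (Suc N)" "inverse (real (Suc n)) \<le> inverse (Suc N)"
        using that by (auto intro!: le_imp_inverse_le)
      then have "(norm (m k - m n))\<^sup>2 < e\<^sup>2"
        using subspace_power2_norm_diff_le[OF sub m(1)[of k] m(1)[of n], where x = x] m(2)[of k] m(2)[of n] N
        unfolding d_def by linarith
      then show ?thesis
        using \<open>0 < e\<close> by (simp add: dist_norm power_less_imp_less_base)
    qed
    then show "\<exists>N. \<forall>k\<ge>N. \<forall>n\<ge>N. dist (m k) (m n) < e"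
      by blast
  qed
  then obtain p where lim: "m \<longlonglongrightarrow> p"
    using Cauchy_convergent_iff convergent_def by blast
  have "p \<in> M"
    using M m(1) lim unfolding closed_csubspace_def by (meson closed_sequentially)
  moreover have "(dist x p)\<^sup>2 \<le> d\<^sup>2"
  proof (rule LIMSEQ_le)
    show "(\<lambda>n. (dist x (m n))\<^sup>2) \<longlonglongrightarrow> (dist x p)\<^sup>2"
      by (intro tendsto_intros lim)
    show "(\<lambda>n. d\<^sup>2 + inverse (Suc n)) \<longlonglongrightarrow> d\<^sup>2"
      using tendsto_add[OF tendsto_const LIMSEQ_inverse_real_of_nat] by simp
    show "\<exists>N. \<forall>n\<ge>N. (dist x (m n))\<^sup>2 \<le> d\<^sup>2 + inverse (Suc n)"
      using m(2) less_imp_le by blast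
  qed
  then have "dist x p \<le> d"
    using infdist_nonneg unfolding d_def by (rule power2_le_imp_le)
  ultimately show ?thesis
    using infdist_le[of _ M x] unfolding d_def by (intro that) (auto intro: order_trans)
qed

lemma closed_csubspace_orthogonal_decomposition:
  fixes x :: "'a::chilbert"
  assumes M: "closed_csubspace M"
  shows "\<exists>p\<in>M. \<forall>q\<in>M. cinner q (x - p) = 0"
proof -
  obtain p where p: "p \<in> M" "\<And>q. q \<in> M \<Longrightarrow> dist x p \<le> dist x q"
    using closed_csubspace_nearest_point[OF M] by blast
  have "cinner (x - p) q = 0" if "q \<in> M" for q
  proof (rule cinner_eq_zero_if_minimal_norm)
    fix c
    have "p + c *\<^sub>C q \<in> M"
      using closed_csubspace_imp_subspace[OF M] p(1) that
      by (intro cvs.subspace_add cvs.subspace_scale)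
    then show "norm (x - p) \<le> norm (x - p - c *\<^sub>C q)"
      using p(2) by (fastforce simp: dist_norm algebra_simps)
  qed
  then show ?thesis
    using p(1) by (metis cinner_commute complex_cnj_zero)
qed

definition orth_proj :: "'a::chilbert set \<Rightarrow> 'a \<Rightarrow> 'a" where
  "orth_proj M x = (SOME p. p \<in> M \<and> (\<forall>q\<in>M. cinner q (x - p) = 0))"

context
  fixes M :: "'a::chilbert set"
  assumes M: "closed_csubspace M"
begin

lemma orth_proj_in: "orth_proj M x \<in> M"
  and cinner_orth_proj_residual: "q \<in> M \<Longrightarrow> cinner q (x - orth_proj M x) = 0"
  using someI_ex[OF closed_csubspace_orthogonal_decomposition[OF M, of x, unfolded Bex_def]]
  unfolding orth_proj_def by blast+

lemma orth_proj_unique: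
  assumes p: "p \<in> M" and orth: "\<And>q. q \<in> M \<Longrightarrow> cinner q (x - p) = 0"
  shows "orth_proj M x = p"
proof -
  let ?d = "orth_proj M x - p"
  have "?d \<in> M"
    using closed_csubspace_imp_subspace[OF M] orth_proj_in p by (rule cvs.subspace_diff)
  have "cinner ?d ?d = cinner ?d ((x - p) - (x - orth_proj M x))"
    by simp
  also have "\<dots> = cinner ?d (x - p) - cinner ?d (x - orth_proj M x)"
    by (rule cinner_diff_right)
  also have "\<dots> = 0"
    using orth[OF \<open>?d \<in> M\<close>] cinner_orth_proj_residual[OF \<open>?d \<in> M\<close>] by simp
  finally have "cinner ?d ?d = 0" .
  then show ?thesis
    by (simp add: cinner_eq_zero_iff)
qed

lemma orth_proj_id: "m \<in> M \<Longrightarrow> orth_proj M m = m"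
  by (rule orth_proj_unique) auto

lemma clinear_orth_proj: "clinear (orth_proj M)"
  unfolding clinear_def
proof (intro conjI allI)
  have sub: "cvs.subspace M"
    using M by (rule closed_csubspace_imp_subspace)
  show "orth_proj M (x + y) = orth_proj M x + orth_proj M y" for x y
  proof (rule orth_proj_unique)
    show "orth_proj M x + orth_proj M y \<in> M"
      by (intro cvs.subspace_add sub orth_proj_in)
    have sum: "x + y - (orth_proj M x + orth_proj M y) = (x - orth_proj M x) + (y - orth_proj M y)"
      by simp
    show "cinner q (x + y - (orth_proj M x + orth_proj M y)) = 0" if "q \<in> M" for q
      unfolding sum using cinner_orth_proj_residual[OF that] by (simp add: cinner_add_right)
  qed
  show "orth_proj M (c *\<^sub>C x) = c *\<^sub>C orth_proj M x" for c x
  proof (rule orth_proj_unique)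
    show "c *\<^sub>C orth_proj M x \<in> M"
      using sub orth_proj_in by (rule cvs.subspace_scale)
    show "cinner q (c *\<^sub>C x - c *\<^sub>C orth_proj M x) = 0" if "q \<in> M" for q
      using cinner_orth_proj_residual[OF that, of x]
      by (simp add: cinner_scaleC_right cvs.scale_right_diff_distrib[symmetric])
  qed
qed

lemma norm_orth_proj_le: "norm (orth_proj M x) \<le> norm x"
proof -
  have "(norm x)\<^sup>2 = (norm (orth_proj M x + (x - orth_proj M x)))\<^sup>2"
    by simp
  also have "\<dots> = (norm (orth_proj M x))\<^sup>2 + (norm (x - orth_proj M x))\<^sup>2"
    unfolding power2_norm_add cinner_orth_proj_residual[OF orth_proj_in] by simp
  finally show ?thesis
    by (simp add: power2_le_imp_le)
qed

lemma orth_proj_residual: "orth_proj M (x - orth_proj M x) = 0"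
  using cinner_orth_proj_residual closed_csubspace_imp_subspace[OF M]
  by (intro orth_proj_unique) (simp_all add: cvs.subspace_0)

end

lemma clinear_imp_module_hom: "clinear f \<Longrightarrow> module_hom scaleC scaleC f"
  unfolding clinear_def
  by (intro module_hom.intro cvs.module_axioms module_hom_axioms.intro) auto

lemma clinear_add: "clinear f \<Longrightarrow> f (x + y) = f x + f y"
  and clinear_scaleC: "clinear f \<Longrightarrow> f (c *\<^sub>C x) = c *\<^sub>C f x"
  unfolding clinear_def by blast+

lemma clinear_zero: "clinear f \<Longrightarrow> f 0 = 0"
  by (rule module_hom.zero[OF clinear_imp_module_hom])

lemma clinear_diff: "clinear f \<Longrightarrow> f (x - y) = f x - f y"
  by (rule module_hom.diff[OF clinear_imp_module_hom])

lemma bounded_clinear_imp_clinear: "bounded_clinear f \<Longrightarrow> clinear f"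
  unfolding bounded_clinear_def by blast

lemma bounded_clinear_imp_bounded_linear: "bounded_clinear f \<Longrightarrow> bounded_linear f"
  unfolding bounded_clinear_def
  by (auto intro: bounded_linear_intro simp: scaleR_scaleC clinear_add clinear_scaleC)

lemma bounded_clinear_scaleC: "bounded_clinear f \<Longrightarrow> bounded_clinear (\<lambda>x. c *\<^sub>C f x)"
proof -
  assume "bounded_clinear f"
  then obtain K where f: "clinear f" "\<And>x. norm (f x) \<le> norm x * K"
    unfolding bounded_clinear_def by blast
  have "clinear (\<lambda>x. c *\<^sub>C f x)"
    using f(1) unfolding clinear_def by (simp add: scaleC_add_right scaleC_scaleC mult.commute)
  moreover have "norm (c *\<^sub>C f x) \<le> norm x * (cmod c * K)" for x
    using mult_left_mono[OF f(2), of "cmod c" x] by (simp add: norm_scaleC mult_ac)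
  ultimately show ?thesis
    unfolding bounded_clinear_def by blast
qed

lemma bounded_clinear_ident: "bounded_clinear (\<lambda>x::'a::complex_inner. x)"
  unfolding bounded_clinear_def clinear_def by (auto intro!: exI[of _ 1])

lemma bounded_clinear_zero: "bounded_clinear (\<lambda>x::'a::complex_inner. 0::'a)"
  unfolding bounded_clinear_def clinear_def by (auto intro!: exI[of _ 0] cvs.scale_zero_right)

lemma cfinite_dim_zero: "cfinite_dim {0}"
  unfolding cfinite_dim_def cspan_eq_span by (auto intro!: exI[of _ "{}"])

lemma not_cfinite_dim_imp_nonzero: "\<not> cfinite_dim E \<Longrightarrow> \<exists>x\<in>E. x \<noteq> 0"
  using cfinite_dim_zero unfolding cfinite_dim_def by blast

lemma not_cfinite_dim_UNIV:
  "infinite_dimensional_space TYPE('a::complex_vector) \<Longrightarrow> \<not> cfinite_dim (UNIV :: 'a set)"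
  unfolding infinite_dimensional_space_def cfinite_dim_def cdependent_eq_dependent cspan_eq_span
  using cvs.independent_span_bound by blast

lemma not_cfinite_dim_injective_image:
  assumes f: "clinear f" "inj f" and W: "\<not> cfinite_dim W" and E: "f ` W \<subseteq> E"
  shows "\<not> cfinite_dim E"
proof
  assume "cfinite_dim E"
  then obtain C where C: "finite C" "E \<subseteq> cvs.span C"
    unfolding cfinite_dim_def cspan_eq_span by blast
  obtain B where B: "B \<subseteq> W" "cvs.independent B" "W \<subseteq> cvs.span B"
    using cvs.maximal_independent_subset by blast
  have "infinite B"
    using W B(3) unfolding cfinite_dim_def cspan_eq_span by blast
  have "cvs.independent (f ` B)"
    using module_hom.independent_injective_image[OF clinear_imp_module_hom[OF f(1)] B(2)] f(2)
    by (simp add: inj_on_subset)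
  moreover have "f ` B \<subseteq> cvs.span C"
    using B(1) E C(2) by blast
  ultimately have "finite (f ` B)"
    using cvs.independent_span_bound[OF C(1)] by blast
  with \<open>infinite B\<close> f(2) show False
    by (simp add: finite_image_iff inj_on_subset)
qed

lemma similar_restr_imp_intertwining_embedding:
  assumes "similar_restr M U S"
  shows "\<exists>E. bounded_clinear E \<and> inj E \<and> (\<forall>v. U (E v) = E (S v))"
proof -
  obtain J E where E: "bounded_clinear E" and JE: "\<forall>x. E x \<in> M \<and> J (E x) = x"
    and US: "\<forall>y\<in>M. U y = E (S (J y))"
    using assms unfolding similar_restr_def by blast
  have "inj E"
    using JE by (metis injI)
  moreover have "\<forall>v. U (E v) = E (S v)"
    using US JE by simp
  ultimately show ?thesis
    using E by blast
qed

lemma universal_op_range_not_cfinite_dim: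
  fixes U :: "'a::complex_inner \<Rightarrow> 'a"
  assumes "infinite_dimensional_space TYPE('a)" "universal_op U"
  shows "\<not> cfinite_dim (range U)"
proof -
  obtain M c where c: "c \<noteq> 0" and sim: "similar_restr M U (\<lambda>x. c *\<^sub>C x)"
    using assms(2) bounded_clinear_ident unfolding universal_op_def by blast
  obtain E :: "'a \<Rightarrow> 'a" where E: "bounded_clinear E" "inj E" and UE: "\<forall>v. U (E v) = E (c *\<^sub>C v)"
    using similar_restr_imp_intertwining_embedding[OF sim] by blast
  have "U (E (inverse c *\<^sub>C v)) = E v" for v
    using c UE by (simp add: scaleC_scaleC scaleC_one)
  then have "range E \<subseteq> range U"
    by (metis image_subsetI rangeI)
  then show ?thesis
    using bounded_clinear_imp_clinear[OF E(1)] E(2) not_cfinite_dim_UNIV[OF assms(1)]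
    by (rule not_cfinite_dim_injective_image[rotated 3])
qed

lemma orth_complement_not_cfinite_dim:
  fixes U :: "'a::chilbert \<Rightarrow> 'a"
  assumes U: "clinear U" and M: "closed_csubspace M" and U0: "\<And>y. y \<in> M \<Longrightarrow> U y = 0"
    and range: "\<not> cfinite_dim (range U)"
  shows "\<not> cfinite_dim {x. orth_proj M x = 0}"
proof
  assume "cfinite_dim {x. orth_proj M x = 0}"
  then obtain B where B: "finite B" "{x. orth_proj M x = 0} \<subseteq> cvs.span B"
    unfolding cfinite_dim_def cspan_eq_span by blast
  have "U x \<in> cvs.span (U ` B)" for x
  proof -
    have "U x = U (x - orth_proj M x)"
      using U0[OF orth_proj_in[OF M]] by (simp add: clinear_diff[OF U])
    moreover have "x - orth_proj M x \<in> cvs.span B"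
      using B(2) orth_proj_residual[OF M] by blast
    ultimately show ?thesis
      using module_hom.span_image[OF clinear_imp_module_hom[OF U]] by blast
  qed
  then have "cfinite_dim (range U)"
    unfolding cfinite_dim_def cspan_eq_span using B(1) by blast
  with range show False ..
qed

lemma bounded_clinear_comp_orth_proj:
  fixes J :: "'a::chilbert \<Rightarrow> 'b::complex_inner"
  assumes M: "closed_csubspace M"
    and J_add: "\<forall>x\<in>M. \<forall>y\<in>M. J (x + y) = J x + J y"
    and J_scaleC: "\<forall>c. \<forall>x\<in>M. J (c *\<^sub>C x) = c *\<^sub>C J x"
    and J_bound: "\<forall>x\<in>M. norm (J x) \<le> norm x * K"
  shows "bounded_clinear (\<lambda>x. J (orth_proj M x))"
  unfolding bounded_clinear_def
proof (intro conjI exI allI)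
  show "clinear (\<lambda>x. J (orth_proj M x))"
    unfolding clinear_def
    by (simp add: clinear_add clinear_scaleC clinear_orth_proj[OF M] J_add J_scaleC orth_proj_in[OF M])
  fix x
  have "norm (J (orth_proj M x)) \<le> norm (orth_proj M x) * K"
    using J_bound orth_proj_in[OF M] by blast
  also have "\<dots> \<le> norm (orth_proj M x) * max K 0"
    by (intro mult_left_mono) simp_all
  also have "\<dots> \<le> norm x * max K 0"
    by (intro mult_right_mono norm_orth_proj_le[OF M]) simp
  finally show "norm (J (orth_proj M x)) \<le> norm x * max K 0" .
qed

lemma universal_op_right_invertible_infinite_kernel:
  fixes U :: "'a::chilbert \<Rightarrow> 'a"
  assumes "infinite_dimensional_space TYPE('a)" "clinear U" "universal_op U"
  shows "\<exists>T V :: 'a \<Rightarrow> 'a. bounded_clinear T \<and> bounded_clinear V \<and> (\<forall>x. T (V x) = x)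
    \<and> \<not> cfinite_dim {x. T x = 0}"
proof -
  obtain M c where M: "closed_csubspace M" and "similar_restr M U (\<lambda>x. c *\<^sub>C 0)"
    using assms(3) bounded_clinear_zero unfolding universal_op_def by blast
  then obtain J V :: "'a \<Rightarrow> 'a" and K where J_add: "\<forall>x\<in>M. \<forall>y\<in>M. J (x + y) = J x + J y"
    and J_scaleC: "\<forall>c. \<forall>x\<in>M. J (c *\<^sub>C x) = c *\<^sub>C J x"
    and J_bound: "\<forall>x\<in>M. norm (J x) \<le> norm x * K"
    and V: "bounded_clinear V" and JV: "\<forall>x. V x \<in> M \<and> J (V x) = x"
    and UM: "\<forall>y\<in>M. U y = V (c *\<^sub>C 0)"
    unfolding similar_restr_def by blast
  have U0: "U y = 0" if "y \<in> M" for y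
    using UM that clinear_zero[OF bounded_clinear_imp_clinear[OF V]]
    by (simp add: cvs.scale_zero_right)
  have "J 0 = 0"
    using J_scaleC M by (metis cvs.scale_zero_left closed_csubspace_def)
  then have "{x. orth_proj M x = 0} \<subseteq> {x. J (orth_proj M x) = 0}"
    by auto
  then have "\<not> cfinite_dim {x. J (orth_proj M x) = 0}"
    using orth_complement_not_cfinite_dim[OF assms(2) M U0
        universal_op_range_not_cfinite_dim[OF assms(1,3)]]
    unfolding cfinite_dim_def by blast
  moreover have "J (orth_proj M (V x)) = x" for x
    using JV orth_proj_id[OF M] by simp
  ultimately show ?thesis
    using V bounded_clinear_comp_orth_proj[OF M J_add J_scaleC J_bound] by blast
qed

section \<open>The inverse of \<open>I - \<lambda> V\<close>\<close>

text \<open>\<open>id_minus_inverse V l u\<close> is \<open>(I - l V)\<^sup>-\<^sup>1 u\<close>, characterised as the fixed point of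
  \<open>d \<mapsto> u + l V d\<close>; it is only meaningful when this map is a contraction.\<close>
definition id_minus_inverse :: "('a::complex_vector \<Rightarrow> 'a) \<Rightarrow> complex \<Rightarrow> 'a \<Rightarrow> 'a" where
  "id_minus_inverse V l u = (THE d. d = u + l *\<^sub>C V d)"

context
  fixes V :: "'a::chilbert \<Rightarrow> 'a" and K :: real
  assumes V: "clinear V" and V_bound: "\<And>x. norm (V x) \<le> norm x * K" and K: "0 \<le> K"
begin

lemma id_minus_inverse_ex1:
  assumes "cmod l * K \<le> 1/2"
  shows "\<exists>!d. d = u + l *\<^sub>C V d"
proof -
  have "dist (u + l *\<^sub>C V x) (u + l *\<^sub>C V y) \<le> cmod l * K * dist x y" for x y
  proof -
    have "(u + l *\<^sub>C V x) - (u + l *\<^sub>C V y) = l *\<^sub>C V (x - y)"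
      by (simp add: clinear_diff[OF V] cvs.scale_right_diff_distrib)
    then have "dist (u + l *\<^sub>C V x) (u + l *\<^sub>C V y) = cmod l * norm (V (x - y))"
      by (simp add: dist_norm norm_scaleC)
    also have "\<dots> \<le> cmod l * K * dist x y"
      using mult_left_mono[OF V_bound[of "x - y"], of "cmod l"] by (simp add: dist_norm mult_ac)
    finally show ?thesis .
  qed
  then have "\<exists>!d. u + l *\<^sub>C V d = d"
    using assms K by (intro banach_fix_type[of "cmod l * K"]) auto
  then show ?thesis
    by (metis (no_types, lifting))
qed

lemma id_minus_inverse_eq:
  "cmod l * K \<le> 1/2 \<Longrightarrow> id_minus_inverse V l u = u + l *\<^sub>C V (id_minus_inverse V l u)"
  unfolding id_minus_inverse_def by (rule theI') (rule id_minus_inverse_ex1)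

lemma id_minus_inverse_unique:
  "cmod l * K \<le> 1/2 \<Longrightarrow> d = u + l *\<^sub>C V d \<Longrightarrow> id_minus_inverse V l u = d"
  unfolding id_minus_inverse_def by (rule the1_equality[OF id_minus_inverse_ex1])

lemma id_minus_inverse_residual:
  "cmod l * K \<le> 1/2 \<Longrightarrow> id_minus_inverse V l u - l *\<^sub>C V (id_minus_inverse V l u) = u"
  using id_minus_inverse_eq by (metis add_diff_cancel_right')

lemma norm_id_minus_inverse_le:
  assumes l: "cmod l * K \<le> 1/2"
  shows "norm (id_minus_inverse V l u) \<le> 2 * norm u"
proof -
  let ?d = "id_minus_inverse V l u"
  have "norm ?d = norm (u + l *\<^sub>C V ?d)"
    using id_minus_inverse_eq[OF l, of u] by (rule arg_cong)
  also have "\<dots> \<le> norm u + cmod l * norm (V ?d)"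
    unfolding norm_scaleC[symmetric] by (rule norm_triangle_ineq)
  also have "\<dots> \<le> norm u + cmod l * K * norm ?d"
    using mult_left_mono[OF V_bound[of ?d], of "cmod l"] by (simp add: mult_ac)
  also have "\<dots> \<le> norm u + 1/2 * norm ?d"
    using mult_right_mono[OF l norm_ge_zero] by simp
  finally show ?thesis
    by simp
qed

lemma clinear_id_minus_inverse:
  assumes l: "cmod l * K \<le> 1/2"
  shows "clinear (id_minus_inverse V l)"
  unfolding clinear_def
proof (intro conjI allI)
  fix u v c
  let ?R = "id_minus_inverse V l"
  have "?R u + ?R v = (u + l *\<^sub>C V (?R u)) + (v + l *\<^sub>C V (?R v))"
    using id_minus_inverse_eq[OF l, of u] id_minus_inverse_eq[OF l, of v] by (rule arg_cong2)
  also have "\<dots> = (u + v) + l *\<^sub>C V (?R u + ?R v)"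
    by (simp add: clinear_add[OF V] scaleC_add_right algebra_simps)
  finally show "?R (u + v) = ?R u + ?R v"
    by (rule id_minus_inverse_unique[OF l])
  have "c *\<^sub>C ?R u = c *\<^sub>C (u + l *\<^sub>C V (?R u))"
    using id_minus_inverse_eq[OF l, of u] by (rule arg_cong)
  also have "\<dots> = c *\<^sub>C u + l *\<^sub>C V (c *\<^sub>C ?R u)"
    by (simp add: clinear_scaleC[OF V] scaleC_add_right scaleC_scaleC mult.commute)
  finally show "?R (c *\<^sub>C u) = c *\<^sub>C ?R u"
    by (rule id_minus_inverse_unique[OF l])
qed

lemma bounded_clinear_id_minus_inverse:
  assumes l: "cmod l * K \<le> 1/2"
  shows "bounded_clinear (id_minus_inverse V l)"
  unfolding bounded_clinear_def
proof (intro conjI exI allI)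
  show "clinear (id_minus_inverse V l)"
    using l by (rule clinear_id_minus_inverse)
  show "norm (id_minus_inverse V l u) \<le> norm u * 2" for u
    using norm_id_minus_inverse_le[OF l, of u] by (simp add: mult.commute)
qed

lemma inj_id_minus_inverse:
  assumes l: "cmod l * K \<le> 1/2"
  shows "inj (id_minus_inverse V l)"
  by (metis injI id_minus_inverse_residual[OF l])

lemma id_minus_inverse_resolvent_identity:
  assumes l: "cmod l * K \<le> 1/2" and m: "cmod m * K \<le> 1/2"
  shows "id_minus_inverse V m u - id_minus_inverse V l u
    = (m - l) *\<^sub>C id_minus_inverse V l (V (id_minus_inverse V m u))"
proof -
  let ?g = "id_minus_inverse V m u - id_minus_inverse V l u"
  have "?g = (u + m *\<^sub>C V (id_minus_inverse V m u)) - (u + l *\<^sub>C V (id_minus_inverse V l u))"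
    using id_minus_inverse_eq[OF m, of u] id_minus_inverse_eq[OF l, of u] by (rule arg_cong2)
  also have "\<dots> = (m - l) *\<^sub>C V (id_minus_inverse V m u) + l *\<^sub>C V ?g"
    by (simp add: clinear_diff[OF V] cvs.scale_right_diff_distrib cvs.scale_left_diff_distrib)
  finally have "id_minus_inverse V l ((m - l) *\<^sub>C V (id_minus_inverse V m u)) = ?g"
    by (rule id_minus_inverse_unique[OF l])
  then show ?thesis
    by (simp add: clinear_scaleC[OF clinear_id_minus_inverse[OF l]])
qed

lemma id_minus_inverse_eigenvector:
  assumes l: "cmod l * K \<le> 1/2" and T: "clinear T" "\<And>x. T (V x) = x" and w: "T w = 0"
  shows "T (id_minus_inverse V l w) = l *\<^sub>C id_minus_inverse V l w"
  using arg_cong[OF id_minus_inverse_eq[OF l, of w], of T] T w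
  by (simp add: clinear_add clinear_scaleC)

lemma norm_id_minus_inverse_diff_le:
  assumes l: "cmod l * K \<le> 1/2" and m: "cmod m * K \<le> 1/2"
  shows "norm (id_minus_inverse V m u - id_minus_inverse V l u) \<le> cmod (m - l) * (4 * K * norm u)"
proof -
  let ?d = "id_minus_inverse V m u"
  have "norm (id_minus_inverse V l (V ?d)) \<le> 2 * (norm ?d * K)"
    using norm_id_minus_inverse_le[OF l, of "V ?d"] V_bound[of ?d] by linarith
  also have "\<dots> \<le> 2 * (2 * norm u * K)"
    using mult_right_mono[OF norm_id_minus_inverse_le[OF m, of u] K] by (simp add: mult_ac)
  finally have "norm (id_minus_inverse V l (V ?d)) \<le> 4 * K * norm u"
    by (simp add: mult_ac)
  then show ?thesis
    unfolding id_minus_inverse_resolvent_identity[OF l m] norm_scaleC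
    by (rule mult_left_mono) simp
qed

lemma vholomorphic_on_id_minus_inverse:
  assumes small: "\<And>l. l \<in> S \<Longrightarrow> cmod l * K \<le> 1/2"
  shows "vholomorphic_on (\<lambda>l. id_minus_inverse V l u) S"
  unfolding vholomorphic_on_def
proof
  fix l
  assume "l \<in> S"
  note l = small[OF this]
  let ?R = "\<lambda>m. id_minus_inverse V m u"
  have "((\<lambda>m. ?R m - ?R l) \<longlongrightarrow> 0) (at l within S)"
  proof (rule tendsto_0_le[where K = "4 * K * norm u"])
    show "((\<lambda>m. m - l) \<longlongrightarrow> 0) (at l within S)"
      by (intro LIM_zero tendsto_ident_at)
    show "\<forall>\<^sub>F m in at l within S. norm (?R m - ?R l) \<le> norm (m - l) * (4 * K * norm u)"
      using norm_id_minus_inverse_diff_le[OF l small]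
      unfolding eventually_at_filter by (intro always_eventually) blast
  qed
  then have cont: "(?R \<longlongrightarrow> ?R l) (at l within S)"
    by (rule LIM_zero_cancel)
  have "bounded_clinear V"
    using V V_bound unfolding bounded_clinear_def by blast
  then have "bounded_linear (\<lambda>x. id_minus_inverse V l (V x))"
    by (rule bounded_linear_compose[OF bounded_clinear_imp_bounded_linear
          [OF bounded_clinear_id_minus_inverse[OF l]] bounded_clinear_imp_bounded_linear])
  from bounded_linear.tendsto[OF this cont]
  have "((\<lambda>m. id_minus_inverse V l (V (?R m))) \<longlongrightarrow> id_minus_inverse V l (V (?R l)))
      (at l within S)" .
  moreover have "\<forall>\<^sub>F m in at l within S.
      id_minus_inverse V l (V (?R m)) = inverse (m - l) *\<^sub>C (?R m - ?R l)"
    unfolding eventually_at_filter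
    by (intro always_eventually)
      (simp add: id_minus_inverse_resolvent_identity[OF l small] scaleC_scaleC scaleC_one)
  ultimately have "((\<lambda>m. inverse (m - l) *\<^sub>C (?R m - ?R l))
      \<longlongrightarrow> id_minus_inverse V l (V (?R l))) (at l within S)"
    by (rule Lim_transform_eventually)
  then show "\<exists>d. ((\<lambda>m. inverse (m - l) *\<^sub>C (?R m - ?R l)) \<longlongrightarrow> d) (at l within S)"
    by (rule exI)
qed

end

lemma vholomorphic_on_compose_bounded_clinear:
  assumes G: "bounded_clinear G" and f: "vholomorphic_on f S"
  shows "vholomorphic_on (\<lambda>z. G (f z)) S"
  unfolding vholomorphic_on_def
proof
  fix z
  assume "z \<in> S"
  then obtain d where "((\<lambda>w. inverse (w - z) *\<^sub>C (f w - f z)) \<longlongrightarrow> d) (at z within S)"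
    using f unfolding vholomorphic_on_def by blast
  then have "((\<lambda>w. G (inverse (w - z) *\<^sub>C (f w - f z))) \<longlongrightarrow> G d) (at z within S)"
    by (rule bounded_linear.tendsto[OF bounded_clinear_imp_bounded_linear[OF G]])
  then show "\<exists>d. ((\<lambda>w. inverse (w - z) *\<^sub>C (G (f w) - G (f z))) \<longlongrightarrow> d) (at z within S)"
    using bounded_clinear_imp_clinear[OF G] by (auto simp: clinear_scaleC clinear_diff)
qed

section \<open>Eigenvectors and spectra of universal operators\<close>

lemma right_invertible_holomorphic_eigenvectors:
  fixes S V :: "'a::chilbert \<Rightarrow> 'a"
  assumes S: "clinear S" and V: "bounded_clinear V" and SV: "\<forall>x. S (V x) = x"
    and ker: "\<not> cfinite_dim {x. S x = 0}"
  obtains r y where "0 < r" "vholomorphic_on y (ball 0 r)"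
    "\<And>z. z \<in> ball 0 r \<Longrightarrow> S (y z) = z *\<^sub>C y z \<and> y z \<noteq> 0"
    "\<And>z. z \<in> ball 0 r \<Longrightarrow> \<not> cfinite_dim {x. S x = z *\<^sub>C x}"
proof -
  obtain K0 where "clinear V" and K0: "\<And>x. norm (V x) \<le> norm x * K0"
    using V unfolding bounded_clinear_def by blast
  define K where "K = max K0 1"
  have "norm (V x) \<le> norm x * K" for x
    using K0[of x] unfolding K_def by (meson max.cobounded1 mult_left_mono norm_ge_zero order_trans)
  then have V': "clinear V" "\<And>x. norm (V x) \<le> norm x * K" "0 \<le> K"
    using \<open>clinear V\<close> by (simp_all add: K_def)
  define r where "r = 1 / (2 * K)"
  have r: "0 < r" and small: "\<And>z. z \<in> ball 0 r \<Longrightarrow> cmod z * K \<le> 1/2"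
    unfolding r_def K_def by (auto simp: field_simps)
  have eigen: "S (id_minus_inverse V z w) = z *\<^sub>C id_minus_inverse V z w"
    if "z \<in> ball 0 r" "S w = 0" for z w
    using id_minus_inverse_eigenvector[OF V' small[OF that(1)] S] SV that(2) by blast
  note R = clinear_id_minus_inverse[OF V' small] inj_id_minus_inverse[OF V' small]
  obtain w0 where w0: "S w0 = 0" "w0 \<noteq> 0"
    using not_cfinite_dim_imp_nonzero[OF ker] by blast
  show ?thesis
  proof
    show "0 < r" by (fact r)
    show "vholomorphic_on (\<lambda>z. id_minus_inverse V z w0) (ball 0 r)"
      by (intro vholomorphic_on_id_minus_inverse[OF V'] small)
    show "S (id_minus_inverse V z w0) = z *\<^sub>C id_minus_inverse V z w0
        \<and> id_minus_inverse V z w0 \<noteq> 0" if "z \<in> ball 0 r" for z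
      using eigen[OF that w0(1)] clinear_zero[OF R(1)[OF that]]
        injD[OF R(2)[OF that], of w0 0] w0(2) by auto
    show "\<not> cfinite_dim {x. S x = z *\<^sub>C x}" if "z \<in> ball 0 r" for z
      using R(1,2)[OF that] ker
    proof (rule not_cfinite_dim_injective_image)
      show "id_minus_inverse V z ` {x. S x = 0} \<subseteq> {x. S x = z *\<^sub>C x}"
        using eigen[OF that] by blast
    qed
  qed
qed

lemma universal_op_holomorphic_eigenvectors:
  fixes U :: "'a::chilbert \<Rightarrow> 'a"
  assumes "infinite_dimensional_space TYPE('a)" "clinear U" "universal_op U"
  obtains r y where "0 < r" "vholomorphic_on y (ball 0 r)"
    "\<And>z. z \<in> ball 0 r \<Longrightarrow> U (y z) = z *\<^sub>C y z \<and> y z \<noteq> 0"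
    "\<And>z. z \<in> ball 0 r \<Longrightarrow> \<not> cfinite_dim {x. U x = z *\<^sub>C x}"
proof -
  obtain T V :: "'a \<Rightarrow> 'a" where T: "bounded_clinear T" and V: "bounded_clinear V"
    and TV: "\<forall>x. T (V x) = x" and ker: "\<not> cfinite_dim {x. T x = 0}"
    using universal_op_right_invertible_infinite_kernel[OF assms] by blast
  obtain M c where c: "c \<noteq> 0" and sim: "similar_restr M U (\<lambda>x. c *\<^sub>C T x)"
    using assms(3) T unfolding universal_op_def by blast
  obtain E :: "'a \<Rightarrow> 'a" where E: "bounded_clinear E" "inj E"
    and UE: "\<forall>v. U (E v) = E (c *\<^sub>C T v)"
    using similar_restr_imp_intertwining_embedding[OF sim] by blast
  text \<open>\<open>U\<close> contains \<open>c T\<close> rather than \<open>T\<close>, whose right inverse is \<open>c\<^sup>-\<^sup>1 V\<close>.\<close>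
  have cT: "clinear (\<lambda>x. c *\<^sub>C T x)"
    by (rule bounded_clinear_imp_clinear[OF bounded_clinear_scaleC[OF T]])
  have cTV: "\<forall>x. c *\<^sub>C T (inverse c *\<^sub>C V x) = x"
    using c TV by (simp add: clinear_scaleC[OF bounded_clinear_imp_clinear[OF T]] scaleC_scaleC scaleC_one)
  have "{x. c *\<^sub>C T x = 0} = {x. T x = 0}"
    using c by (metis cvs.scale_eq_0_iff)
  then have "\<not> cfinite_dim {x. c *\<^sub>C T x = 0}"
    using ker by simp
  then obtain r y where r: "0 < r" and y: "vholomorphic_on y (ball 0 r)"
    "\<And>z. z \<in> ball 0 r \<Longrightarrow> c *\<^sub>C T (y z) = z *\<^sub>C y z \<and> y z \<noteq> 0"
    and mult: "\<And>z. z \<in> ball 0 r \<Longrightarrow> \<not> cfinite_dim {x. c *\<^sub>C T x = z *\<^sub>C x}"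
    using right_invertible_holomorphic_eigenvectors[OF cT bounded_clinear_scaleC[OF V] cTV] by blast
  have UE_eigen: "U (E x) = z *\<^sub>C E x" if "c *\<^sub>C T x = z *\<^sub>C x" for x z
  proof -
    have "U (E x) = E (z *\<^sub>C x)"
      using UE that by metis
    then show ?thesis
      by (simp add: clinear_scaleC[OF bounded_clinear_imp_clinear[OF E(1)]])
  qed
  show ?thesis
  proof
    show "0 < r" by (fact r)
    show "vholomorphic_on (\<lambda>z. E (y z)) (ball 0 r)"
      using E(1) y(1) by (rule vholomorphic_on_compose_bounded_clinear)
    show "U (E (y z)) = z *\<^sub>C E (y z) \<and> E (y z) \<noteq> 0" if "z \<in> ball 0 r" for z
      using y(2)[OF that] UE_eigen clinear_zero[OF bounded_clinear_imp_clinear[OF E(1)]]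
        injD[OF E(2), of "y z" 0] by auto
    show "\<not> cfinite_dim {x. U x = z *\<^sub>C x}" if "z \<in> ball 0 r" for z
      using bounded_clinear_imp_clinear[OF E(1)] E(2) mult[OF that]
      by (rule not_cfinite_dim_injective_image) (auto intro: UE_eigen)
  qed
qed

lemma fredholm_imp_upper_semi_fredholm: "fredholm A \<Longrightarrow> upper_semi_fredholm A"
  unfolding fredholm_def upper_semi_fredholm_def by blast

lemma cinvertible_imp_fredholm:
  assumes "cinvertible A"
  shows "fredholm A"
proof -
  obtain R where R: "clinear R" "\<forall>x. R (A x) = x" "\<forall>x. A (R x) = x"
    using assms unfolding cinvertible_def bounded_clinear_def by blast
  have "x = 0" if "A x = 0" for x
    using R(2) clinear_zero[OF R(1)] that by metis
  then have "{x. A x = 0} \<subseteq> cspan {}"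
    unfolding cspan_eq_span by (auto simp: cvs.span_empty)
  moreover have "range A = UNIV"
    using R(3) by (metis surj_def)
  moreover have "x = A (R x) + 0 \<and> 0 \<in> cspan {}" for x
    using R(3) unfolding cspan_eq_span by (simp add: cvs.span_zero)
  ultimately show ?thesis
    unfolding fredholm_def cfinite_dim_def by (metis closed_UNIV finite.emptyI)
qed

lemma upper_essential_spectrum_subset_essential_spectrum:
  "upper_essential_spectrum S \<subseteq> essential_spectrum S"
  unfolding upper_essential_spectrum_def essential_spectrum_def
  using fredholm_imp_upper_semi_fredholm by blast

lemma essential_spectrum_subset_op_spectrum: "essential_spectrum S \<subseteq> op_spectrum S"
  unfolding op_spectrum_def essential_spectrum_def using cinvertible_imp_fredholm by blast

lemma infinite_multiplicity_eigenvalue: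
  assumes "\<not> cfinite_dim {x. S x = l *\<^sub>C x}"
  shows "l \<in> point_spectrum S \<inter> upper_essential_spectrum S"
proof -
  have "{x. shift_op S l x = 0} = {x. S x = l *\<^sub>C x}"
    unfolding shift_op_def by simp
  then show ?thesis
    using assms not_cfinite_dim_imp_nonzero[OF assms]
    unfolding point_spectrum_def upper_essential_spectrum_def upper_semi_fredholm_def by auto
qed

theorem theorem2p2:
  fixes U :: "'a::chilbert \<Rightarrow> 'a"
  assumes "separable_space_type TYPE('a)"
    and "infinite_dimensional_space TYPE('a)"
    and "bounded_clinear U"
    and "universal_op U"
  shows "(\<exists>r>0.
            ball 0 r \<subseteq> point_spectrum U \<inter> upper_essential_spectrum U \<and>
            point_spectrum U \<inter> upper_essential_spectrum U \<subseteq> essential_spectrum U \<and>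
            essential_spectrum U \<subseteq> op_spectrum U \<and>
            (\<forall>l\<in>ball 0 r. \<not> cfinite_dim {x. U x = l *\<^sub>C x}))
       \<and> 0 \<in> interior (upper_essential_spectrum U)
       \<and> 0 \<in> interior (essential_spectrum U)
       \<and> 0 \<in> interior (point_spectrum U)
       \<and> 0 \<in> interior (op_spectrum U)
       \<and> (\<exists>r>0. \<exists>y :: complex \<Rightarrow> 'a.
            vholomorphic_on y (ball 0 r) \<and>
            (\<forall>z\<in>ball 0 r. U (y z) = z *\<^sub>C y z \<and> y z \<noteq> 0))"
proof -
  obtain r y where r: "0 < r" and y: "vholomorphic_on y (ball 0 r)"
    "\<And>z. z \<in> ball 0 r \<Longrightarrow> U (y z) = z *\<^sub>C y z \<and> y z \<noteq> 0"
    and mult: "\<And>z. z \<in> ball 0 r \<Longrightarrow> \<not> cfinite_dim {x. U x = z *\<^sub>C x}"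
    using universal_op_holomorphic_eigenvectors[OF assms(2)
        bounded_clinear_imp_clinear[OF assms(3)] assms(4)] by blast
  have ball: "ball 0 r \<subseteq> point_spectrum U \<inter> upper_essential_spectrum U"
    using mult infinite_multiplicity_eigenvalue by blast
  have incl: "point_spectrum U \<inter> upper_essential_spectrum U \<subseteq> essential_spectrum U"
    "essential_spectrum U \<subseteq> op_spectrum U"
    using upper_essential_spectrum_subset_essential_spectrum essential_spectrum_subset_op_spectrum
    by blast+
  have "0 \<in> interior A" if "ball 0 r \<subseteq> A" for A :: "complex set"
    using r that by (auto simp: mem_interior)
  then have "0 \<in> interior (upper_essential_spectrum U)" "0 \<in> interior (essential_spectrum U)"
    "0 \<in> interior (point_spectrum U)" "0 \<in> interior (op_spectrum U)"
    using ball incl by (meson Int_subset_iff order_trans)+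
  then show ?thesis
    using r y mult ball incl by blast
qed

end
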